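(* Let $M,N\in\mathbb{S}^{q+r}$. If there exist scalars $\alpha\ge 0$ and $\beta>0$ such that $M-\alpha N\ge\begin{bmatrix}\beta I_q&0\\0&0\end{bmatrix}$ ( * ), then $\mathcal{Z}_r(N)\subseteq\mathcal{Z}_r^+(M)$. Moreover, if $N\in\boldsymbol{\Pi}_{q,r}$, $M_{22}\le 0$, and $N$ has at least one positive eigenvalue, then $\mathcal{Z}_r(N)\subseteq\mathcal{Z}_r^+(M)$ if and only if there exist $\alpha\ge 0$ and $\beta>0$ such that ( * ) holds.
   Context: $\mathbb{S}^k$ denotes the real symmetric $k\times k$ matrices; for symmetric matrices, $A\ge 0$ ($A>0$) means positive semidefinite (definite), $A\le B$ means $B-A\ge0$. $A^\dagger$ is the Moore–Penrose pseudo-inverse. Any $\Pi\in\mathbb{S}^{q+r}$ (in particular $M,N$) is partitioned as $\Pi=\begin{bmatrix}\Pi_{11}&\Pi_{12}\\ \Pi_{21}&\Pi_{22}\end{bmatrix}$ with $\Pi_{11}\in\mathbb{S}^q$, $\Pi_{22}\in\mathbb{S}^r$. The generalized Schur complement is $\Pi\mid\Pi_{22}:=\Pi_{11}-\Pi_{12}\Pi_{22}^\dagger\Pi_{21}$. The set $\boldsymbol{\Pi}_{q,r}$ consists of all $\Pi\in\mathbb{S}^{q+r}$ with $\Pi_{22}\le 0$, $\Pi\mid\Pi_{22}\ge 0$ and $\ker\Pi_{22}\subseteq\ker\Pi_{12}$. Define $\mathcal{Z}_r(\Pi)=\{Z\in\mathbb{R}^{r\times q}:\begin{bmatrix}I_q\\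 Z\end{bmatrix}^\top\Pi\begin{bmatrix}I_q\\ Z\end{bmatrix}\ge 0\}$ and $\mathcal{Z}_r^+(\Pi)$ the same with $>0$. *)

theory Defs
  imports "HOL-Analysis.Analysis"
begin

text \<open>Matrices in S^(q+r) are rendered as real^('q::finite+'r::finite)^('q+'r), with the
index set split as Inl (first q indices) and Inr (last r indices).\<close>

definition symm :: "real^'n^'n \<Rightarrow> bool" where
  "symm A \<longleftrightarrow> transpose A = A"

definition psd :: "real^'n^'n \<Rightarrow> bool" where
  "psd A \<longleftrightarrow> symm A \<and> (\<forall>x. 0 \<le> x \<bullet> (A *v x))"

definition pd :: "real^'n^'n \<Rightarrow> bool" where
  "pd A \<longleftrightarrow> symm A \<and> (\<forall>x. x \<noteq> 0 \<longrightarrow> 0 < x \<bullet> (A *v x))"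

definition loewner_le :: "real^'n^'n \<Rightarrow> real^'n^'n \<Rightarrow> bool" where
  "loewner_le A B \<longleftrightarrow> psd (B - A)"

definition pinv :: "real^'n^'m \<Rightarrow> real^'m^'n" where
  "pinv A = (THE X. A ** X ** A = A \<and> X ** A ** X = X \<and>
                    transpose (A ** X) = A ** X \<and> transpose (X ** A) = X ** A)"

definition blk11 :: "real^('q::finite+'r::finite)^('q+'r) \<Rightarrow> real^'q^'q" where
  "blk11 P = (\<chi> i j. P $ Inl i $ Inl j)"
definition blk12 :: "real^('q::finite+'r::finite)^('q+'r) \<Rightarrow> real^'r^'q" where
  "blk12 P = (\<chi> i j. P $ Inl i $ Inr j)"
definition blk21 :: "real^('q::finite+'r::finite)^('q+'r) \<Rightarrow> real^'q^'r" where
  "blk21 P = (\<chi> i j. P $ Inr i $ Inl j)"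
definition blk22 :: "real^('q::finite+'r::finite)^('q+'r) \<Rightarrow> real^'r^'r" where
  "blk22 P = (\<chi> i j. P $ Inr i $ Inr j)"

definition schur :: "real^('q::finite+'r::finite)^('q+'r) \<Rightarrow> real^'q^'q" where
  "schur P = blk11 P - blk12 P ** pinv (blk22 P) ** blk21 P"

definition PiSet :: "(real^('q::finite+'r::finite)^('q+'r)) set" where
  "PiSet = {P. symm P \<and> loewner_le (blk22 P) 0 \<and> psd (schur P) \<and>
              {x. blk22 P *v x = 0} \<subseteq> {x. blk12 P *v x = 0}}"

definition stackIZ :: "real^'q::finite^'r::finite \<Rightarrow> real^'q^('q+'r)" where
  "stackIZ Z = (\<chi> k j. case k of Inl i \<Rightarrow> (if i = j then 1 else 0) | Inr i \<Rightarrow> Z $ i $ j)"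

definition Zset :: "real^('q::finite+'r::finite)^('q+'r) \<Rightarrow> (real^'q^'r) set" where
  "Zset P = {Z. psd (transpose (stackIZ Z) ** P ** stackIZ Z)}"

definition Zset_plus :: "real^('q::finite+'r::finite)^('q+'r) \<Rightarrow> (real^'q^'r) set" where
  "Zset_plus P = {Z. pd (transpose (stackIZ Z) ** P ** stackIZ Z)}"

definition betaI0 :: "real \<Rightarrow> real^('q::finite+'r::finite)^('q+'r)" where
  "betaI0 \<beta> = (\<chi> k l. case (k, l) of (Inl i, Inl j) \<Rightarrow> (if i = j then \<beta> else 0) | _ \<Rightarrow> 0)"

definition has_pos_eigenvalue :: "real^'n^'n \<Rightarrow> bool" where
  "has_pos_eigenvalue A \<longleftrightarrow> (\<exists>c v. c > 0 \<and> v \<noteq> 0 \<and> A *v v = c *\<^sub>R v)"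

end

theory Submission
  imports Defs
begin

text \<open>Sufficiency is immediate: on the graph \<open>(x, Z x)\<close> of any \<open>Z \<in> Z\<^sub>r(N)\<close> the hypothesis gives
  \<open>w\<^sup>T M w \<ge> \<alpha> w\<^sup>T N w + \<beta> \<parallel>x\<parallel>\<^sup>2 \<ge> \<beta> \<parallel>x\<parallel>\<^sup>2\<close>.

  For necessity, with \<open>Z\<^sub>c = - N\<^sub>2\<^sub>2\<^sup>\<dagger> N\<^sub>2\<^sub>1\<close> the form of \<open>N\<close> splits as
  \<open>w\<^sup>T N w = x\<^sup>T (N | N\<^sub>2\<^sub>2) x + e\<^sup>T N\<^sub>2\<^sub>2 e\<close> with \<open>e = y - Z\<^sub>c x\<close>, a positive
  semidefinite plus a negative semidefinite part. Hence every \<open>w = (x, y)\<close> with \<open>x \<noteq> 0\<close> in the cone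
  \<open>w\<^sup>T N w \<ge> 0\<close> lies on the graph of some \<open>Z \<in> Z\<^sub>r(N)\<close>, a rank-one update of \<open>Z\<^sub>c\<close>, so the
  inclusion makes \<open>w\<^sup>T M w\<close> positive on that cone. Both forms are blind to the directions
  \<open>(0, ker N\<^sub>2\<^sub>2)\<close>; modulo these the slice \<open>\<parallel>x\<parallel> = 1\<close> of the cone is compact, which makes the
  positivity uniform: \<open>w\<^sup>T M w \<ge> \<beta> \<parallel>x\<parallel>\<^sup>2\<close> on the cone. Since \<open>N\<close> takes a positive value, the
  S-lemma turns this implication between quadratic inequalities into \<open>M - \<beta> diag(I, 0) - \<alpha> N \<ge> 0\<close>.\<close>

section \<open>Quadratic forms\<close>

definition quad :: "real^'n^'n \<Rightarrow> real^'n \<Rightarrow> real" where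
  "quad A x = x \<bullet> (A *v x)"

lemma matrix_vector_mult_uminus_left: "(- A) *v x = - (A *v (x::real^'n))"
  by (simp add: vec_eq_iff matrix_vector_mult_def sum_negf)

lemma inner_transpose_matrix: "(transpose A *v x) \<bullet> y = x \<bullet> ((A::real^'n^'m) *v y)"
  by (simp add: dot_lmul_matrix)

lemma symm_inner_commute: "symm A \<Longrightarrow> (A *v x) \<bullet> y = x \<bullet> ((A::real^'n^'n) *v y)"
  unfolding symm_def by (metis inner_transpose_matrix)

lemma symmI_inner:
  assumes "\<And>x y. (A *v x) \<bullet> y = x \<bullet> ((A::real^'n^'n) *v y)"
  shows "symm A"
proof -
  have "transpose A *v x = A *v x" for x
    by (metis assms inner_transpose_matrix vector_eq_rdot)
  then show ?thesis unfolding symm_def by (simp add: matrix_eq)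
qed

lemma symm_diff: "symm A \<Longrightarrow> symm B \<Longrightarrow> symm (A - B)"
  and symm_scaleR: "symm A \<Longrightarrow> symm (c *\<^sub>R A)"
  by (auto simp: symm_def transpose_def vec_eq_iff)

lemma symm_sandwich: "symm A \<Longrightarrow> symm (transpose S ** A ** S)"
  unfolding symm_def by (simp add: matrix_transpose_mul matrix_mul_assoc)

lemma psd_iff_quad: "psd A \<longleftrightarrow> symm A \<and> (\<forall>x. 0 \<le> quad A x)"
  by (simp add: psd_def quad_def)

lemma pd_iff_quad: "pd A \<longleftrightarrow> symm A \<and> (\<forall>x. x \<noteq> 0 \<longrightarrow> 0 < quad A x)"
  by (simp add: pd_def quad_def)

lemma quad_diff_matrix: "quad (A - B) x = quad A x - quad B x"
  and quad_scaleR_matrix: "quad (c *\<^sub>R A) x = c * quad A x"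
  and quad_uminus_matrix: "quad (- A) x = - quad A x"
  by (simp_all add: quad_def matrix_vector_mult_diff_rdistrib inner_diff_right
      scaleR_matrix_vector_assoc[symmetric] matrix_vector_mult_uminus_left)

lemma quad_scaleR: "quad A (c *\<^sub>R x) = c\<^sup>2 * quad A x"
  by (simp add: quad_def matrix_vector_mult_scaleR power2_eq_square)

lemma quad_add_scaleR:
  "quad A (u + t *\<^sub>R v) = quad A u + t * (u \<bullet> (A *v v) + v \<bullet> (A *v u)) + t\<^sup>2 * quad A v"
  by (simp add: quad_def matrix_vector_right_distrib matrix_vector_mult_scaleR inner_add_left
      inner_add_right algebra_simps power2_eq_square)

lemma quad_add_symm:
  assumes "symm A"
  shows "quad A (u + v) = quad A u + 2 * (u \<bullet> (A *v v)) + quad A v"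
  using quad_add_scaleR[of A u 1 v] symm_inner_commute[OF assms, of v u]
  by (simp add: inner_commute)

lemma quad_add_kernel:
  assumes "symm A" "A *v z = 0"
  shows "quad A (w + z) = quad A w"
  using assms symm_inner_commute[OF assms(1), of z w]
  by (simp add: quad_def matrix_vector_right_distrib inner_add_left inner_add_right)

lemma quad_sandwich: "quad (transpose S ** A ** S) x = quad A (S *v x)"
  unfolding quad_def matrix_vector_mul_assoc[symmetric]
  by (metis inner_commute inner_transpose_matrix)

lemma continuous_on_quad: "continuous_on X (quad A)"
  unfolding quad_def
  by (intro continuous_on_inner continuous_on_id matrix_vector_mult_linear_continuous_on)

lemma nonneg_quadratic_discriminant:
  fixes a b c :: real
  assumes nonneg: "\<And>t. 0 \<le> c + t * a + t\<^sup>2 * b"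
  shows "a\<^sup>2 \<le> 4 * b * c"
proof (cases "b > 0")
  case True
  have "0 \<le> c + (- a / (2 * b)) * a + (- a / (2 * b))\<^sup>2 * b" by (rule nonneg)
  also have "\<dots> = c - a\<^sup>2 / (4 * b)" using True by (simp add: field_simps power2_eq_square)
  finally show ?thesis using True by (simp add: field_simps)
next
  case False
  have "a = 0"
  proof (rule ccontr)
    assume "a \<noteq> 0"
    define t where "t = - (\<bar>c\<bar> + 1) / a"
    have "t\<^sup>2 * b \<le> 0" using False by (simp add: mult_nonneg_nonpos)
    then have "c + t * a + t\<^sup>2 * b < 0" using \<open>a \<noteq> 0\<close> unfolding t_def by simp
    with nonneg show False by (simp add: not_le[symmetric])
  qed
  have "b = 0"
  proof (rule ccontr)
    assume "b \<noteq> 0"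
    then have "b < 0" using False by simp
    have "0 \<le> c" using nonneg[of 0] by simp
    define t where "t = sqrt ((c + 1) / - b)"
    have "t\<^sup>2 = (c + 1) / - b" unfolding t_def using \<open>b < 0\<close> \<open>0 \<le> c\<close> by (simp add: divide_nonneg_neg)
    then have "t\<^sup>2 * b = - (c + 1)" using \<open>b < 0\<close> by (simp add: field_simps)
    then show False using nonneg[of t] \<open>a = 0\<close> by simp
  qed
  then show ?thesis using \<open>a = 0\<close> by simp
qed

lemma psd_cauchy_schwarz:
  assumes "psd A"
  shows "(u \<bullet> (A *v x))\<^sup>2 \<le> quad A u * quad A x"
proof -
  have "x \<bullet> (A *v u) = u \<bullet> (A *v x)"
    using assms symm_inner_commute[of A x u] by (simp add: psd_def inner_commute)
  then have "0 \<le> quad A u + t * (2 * (u \<bullet> (A *v x))) + t\<^sup>2 * quad A x" for t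
    using assms quad_add_scaleR[of A u t x] unfolding psd_iff_quad by (metis mult_2)
  from nonneg_quadratic_discriminant[OF this] show ?thesis by (simp add: power2_eq_square mult.commute)
qed

lemma psd_quad_eq_0_imp_kernel:
  assumes "psd A" "quad A x = 0"
  shows "A *v x = 0"
  using psd_cauchy_schwarz[OF assms(1), of "A *v x" x] assms(2)
  by (simp add: quad_def)

lemma psd_coercive_on_kernel_complement:
  assumes A: "psd A"
  obtains \<mu> where "0 < \<mu>" "\<And>y. (\<And>k. A *v k = 0 \<Longrightarrow> y \<bullet> k = 0) \<Longrightarrow> \<mu> * (y \<bullet> y) \<le> quad A y"
proof -
  define T where "T = {y. norm y = 1 \<and> (\<forall>k. A *v k = 0 \<longrightarrow> y \<bullet> k = 0)}"
  have "closed T" unfolding T_def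
    by (intro closed_Collect_conj closed_Collect_all closed_Collect_imp open_Collect_const
        closed_Collect_eq continuous_intros)
  moreover have "bounded T" unfolding T_def bounded_iff by auto
  ultimately have "compact T" by (simp add: compact_eq_bounded_closed)
  have normalize: "(1 / norm y) *\<^sub>R y \<in> T" if "y \<noteq> 0" "\<And>k. A *v k = 0 \<Longrightarrow> y \<bullet> k = 0" for y
    using that by (simp add: T_def)
  obtain \<mu> where \<mu>: "0 < \<mu>" "\<And>y. y \<in> T \<Longrightarrow> \<mu> \<le> quad A y"
  proof (cases "T = {}")
    case True
    then show ?thesis using that[of 1] by simp
  next
    case False
    obtain y0 where y0: "y0 \<in> T" "\<And>y. y \<in> T \<Longrightarrow> quad A y0 \<le> quad A y"
      using continuous_attains_inf[OF \<open>compact T\<close> False continuous_on_quad] by blast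
    have "quad A y0 \<noteq> 0"
    proof
      assume "quad A y0 = 0"
      then have "y0 \<bullet> y0 = 0"
        using y0(1) psd_quad_eq_0_imp_kernel[OF A] by (simp add: T_def)
      then show False using y0(1) by (simp add: T_def)
    qed
    moreover have "0 \<le> quad A y0" using A by (simp add: psd_iff_quad)
    ultimately have "0 < quad A y0" by simp
    then show ?thesis using that y0(2) by blast
  qed
  have "\<mu> * (y \<bullet> y) \<le> quad A y" if "\<And>k. A *v k = 0 \<Longrightarrow> y \<bullet> k = 0" for y
  proof (cases "y = 0")
    case False
    have "\<mu> \<le> quad A ((1 / norm y) *\<^sub>R y)" using \<mu>(2) normalize[OF False that] .
    then show ?thesis
      using False by (simp add: quad_scaleR power2_norm_eq_inner[symmetric] field_simps)
  qed (simp add: quad_def)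
  then show ?thesis using \<mu>(1) that by blast
qed

text \<open>The witness is \<open>v = P x / quad P x\<close> (or \<open>x / \<parallel>x\<parallel>\<^sup>2\<close> if \<open>quad P x = 0\<close>, which forces
  \<open>k = 0\<close>); Cauchy--Schwarz for \<open>P\<close> does the rest.\<close>

lemma psd_rank_one_completion:
  assumes P: "psd P" and "x \<noteq> 0" "k \<le> 0" "0 \<le> quad P x + k"
  obtains v where "v \<bullet> x = 1" "\<And>u. 0 \<le> quad P u + (v \<bullet> u)\<^sup>2 * k"
proof (cases "0 < quad P x")
  case True
  define p where "p = quad P x"
  have Px: "(P *v x) \<bullet> u = u \<bullet> (P *v x)" for u by (rule inner_commute)
  show ?thesis
  proof (rule that)
    show "((1 / p) *\<^sub>R (P *v x)) \<bullet> x = 1"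
      using True by (simp add: p_def quad_def inner_commute)
    fix u
    have "(u \<bullet> (P *v x))\<^sup>2 \<le> quad P u * p"
      unfolding p_def by (rule psd_cauchy_schwarz[OF P])
    then have "- quad P u \<le> ((1 / p) * (u \<bullet> (P *v x)))\<^sup>2 * (- p)"
      using True by (simp add: p_def power2_eq_square field_simps)
    also have "\<dots> \<le> ((1 / p) * (u \<bullet> (P *v x)))\<^sup>2 * k"
      using assms(4) by (intro mult_left_mono) (auto simp: p_def)
    finally show "0 \<le> quad P u + (((1 / p) *\<^sub>R (P *v x)) \<bullet> u)\<^sup>2 * k"
      by (simp add: Px)
  qed
next
  case False
  then have "k = 0" using P assms(3,4) by (simp add: psd_iff_quad)
  show ?thesis
  proof (rule that)
    show "((1 / (x \<bullet> x)) *\<^sub>R x) \<bullet> x = 1" using assms(2) by simp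
    show "0 \<le> quad P u + (((1 / (x \<bullet> x)) *\<^sub>R x) \<bullet> u)\<^sup>2 * k" for u
      using P \<open>k = 0\<close> by (simp add: psd_iff_quad)
  qed
qed

section \<open>The Moore--Penrose inverse of a symmetric matrix\<close>

definition penrose_inverse :: "real^'n^'m \<Rightarrow> real^'m^'n \<Rightarrow> bool" where
  "penrose_inverse A X \<longleftrightarrow> A ** X ** A = A \<and> X ** A ** X = X \<and>
     transpose (A ** X) = A ** X \<and> transpose (X ** A) = X ** A"

lemma penrose_inverse_unique:
  assumes "penrose_inverse A X" "penrose_inverse A Y"
  shows "X = Y"
proof -
  have a: "A ** X ** A = A" "X ** A ** X = X" "transpose (A ** X) = A ** X"
    "transpose (X ** A) = X ** A"
    using assms(1) unfolding penrose_inverse_def by auto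
  have b: "A ** Y ** A = A" "Y ** A ** Y = Y" "transpose (A ** Y) = A ** Y"
    "transpose (Y ** A) = Y ** A"
    using assms(2) unfolding penrose_inverse_def by auto
  have "X = X ** (A ** X)" using a by (simp add: matrix_mul_assoc)
  also have "\<dots> = X ** transpose X ** transpose A"
    by (metis a(3) matrix_transpose_mul matrix_mul_assoc)
  also have "\<dots> = X ** transpose X ** transpose (A ** Y ** A)" using b by simp
  also have "\<dots> = X ** (transpose (A ** X) ** transpose (A ** Y))"
    by (simp add: matrix_transpose_mul matrix_mul_assoc)
  also have "\<dots> = X ** A ** X ** A ** Y" using a b by (simp add: matrix_mul_assoc)
  also have "\<dots> = X ** A ** Y" using a by simp
  finally have X: "X = X ** A ** Y" .
  have "Y = Y ** A ** Y" using b by simp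
  also have "\<dots> = transpose A ** transpose Y ** Y"
    by (metis b(4) matrix_transpose_mul)
  also have "\<dots> = transpose (A ** X ** A) ** transpose Y ** Y" using a by simp
  also have "\<dots> = transpose (X ** A) ** transpose (Y ** A) ** Y"
    by (simp add: matrix_transpose_mul matrix_mul_assoc)
  also have "\<dots> = X ** A ** Y ** A ** Y" using a b by (simp add: matrix_mul_assoc)
  also have "\<dots> = X ** A ** Y" by (metis b(2) matrix_mul_assoc)
  finally show ?thesis using X by simp
qed

lemma penrose_inverse_transpose:
  assumes "penrose_inverse A X"
  shows "penrose_inverse (transpose A) (transpose X)"
proof -
  have tr3: "transpose (B ** C ** D) = transpose D ** transpose C ** transpose B" for B C D :: "real^_^_"
    by (simp add: matrix_transpose_mul matrix_mul_assoc)
  show ?thesis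
    using assms tr3[of A X A] tr3[of X A X] unfolding penrose_inverse_def
    by (simp add: matrix_transpose_mul)
qed

lemma orthogonal_decomposition_unique:
  fixes W :: "'a::euclidean_space set"
  assumes "subspace W" "a \<in> W" "b \<in> W"
    and "\<And>w. w \<in> W \<Longrightarrow> (y - a) \<bullet> w = 0" "\<And>w. w \<in> W \<Longrightarrow> (y - b) \<bullet> w = 0"
  shows "a = b"
proof -
  have "a - b \<in> W" using assms(1-3) by (simp add: subspace_diff)
  then have "(y - b) \<bullet> (a - b) = 0" "(y - a) \<bullet> (a - b) = 0" using assms(4,5) by auto
  then have "(a - b) \<bullet> (a - b) = 0" by (simp add: inner_diff_left)
  then show ?thesis by simp
qed

lemma orthogonal_projection_exists:
  fixes W :: "'a::euclidean_space set"
  assumes W: "subspace W"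
  obtains p where "linear p" "\<And>y. p y \<in> W" "\<And>y w. w \<in> W \<Longrightarrow> (y - p y) \<bullet> w = 0"
proof -
  have "\<forall>y. \<exists>a. a \<in> W \<and> (\<forall>w\<in>W. (y - a) \<bullet> w = 0)"
  proof
    fix y
    obtain a z where "a \<in> span W" "\<And>w. w \<in> span W \<Longrightarrow> orthogonal z w" "y = a + z"
      by (rule orthogonal_subspace_decomp_exists[of W y]) blast
    then show "\<exists>a. a \<in> W \<and> (\<forall>w\<in>W. (y - a) \<bullet> w = 0)"
      using span_eq_iff[THEN iffD2, OF W] by (intro exI[of _ a]) (auto simp: orthogonal_def)
  qed
  then obtain p where "\<forall>y. p y \<in> W \<and> (\<forall>w\<in>W. (y - p y) \<bullet> w = 0)"
    by (auto dest: choice)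
  then have p: "\<And>y. p y \<in> W" "\<And>y w. w \<in> W \<Longrightarrow> (y - p y) \<bullet> w = 0"
    by blast+
  have "linear p"
  proof (rule linearI)
    fix x y :: 'a and c :: real
    have "(x + y - (p x + p y)) \<bullet> w = 0" if "w \<in> W" for w
      using p(2)[OF that, of x] p(2)[OF that, of y]
      by (simp add: diff_add_eq_diff_diff_swap inner_diff_left inner_add_left)
    then show "p (x + y) = p x + p y"
      using p W by (intro orthogonal_decomposition_unique[OF W]) (auto simp: subspace_add)
    have "(c *\<^sub>R x - c *\<^sub>R p x) \<bullet> w = 0" if "w \<in> W" for w
      using p(2)[OF that, of x] by (simp add: inner_diff_left)
    then show "p (c *\<^sub>R x) = c *\<^sub>R p x"
      using p W by (intro orthogonal_decomposition_unique[OF W]) (auto simp: subspace_scale)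
  qed
  then show ?thesis using p that by blast
qed

lemma symm_range_projection:
  assumes sA: "symm A"
  obtains p where "linear p" "\<And>y. p y \<in> range ((*v) A)" "\<And>w. w \<in> range ((*v) A) \<Longrightarrow> p w = w"
    "\<And>x. A *v p x = A *v x" "\<And>x y. p x \<bullet> y = x \<bullet> p y"
proof -
  have W: "subspace (range ((*v) A))"
    by (intro linear_subspace_image matrix_vector_mul_linear subspace_UNIV)
  obtain p where p: "linear p" "\<And>y. p y \<in> range ((*v) A)"
    "\<And>y w. w \<in> range ((*v) A) \<Longrightarrow> (y - p y) \<bullet> w = 0"
    using orthogonal_projection_exists[OF W] by blast
  moreover have "p w = w" if "w \<in> range ((*v) A)" for w
    using p(3)[of "w - p w" w] W that p(2) by (simp add: subspace_diff)
  moreover have "A *v p x = A *v x" for x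
  proof -
    have "(A *v (x - p x)) \<bullet> z = 0" for z
      using p(3)[of "A *v z" x] symm_inner_commute[OF sA] by simp
    then show ?thesis by (metis inner_eq_zero_iff matrix_vector_mult_diff_distrib right_minus_eq)
  qed
  moreover have "p x \<bullet> y = x \<bullet> p y" for x y
    using p(3)[of "p y" x] p(3)[of "p x" y] p(2)
    by (simp add: inner_diff_left) (metis inner_commute)
  ultimately show ?thesis using that by blast
qed

text \<open>For symmetric \<open>A\<close> the pseudo-inverse is \<open>g \<circ> p\<close>, where \<open>p\<close> projects onto the range
  \<open>W\<close> of \<open>A\<close> and \<open>g\<close> inverts \<open>A\<close> on \<open>W\<close>; \<open>A\<close> is injective there because its kernel is
  orthogonal to \<open>W\<close>.\<close>

lemma penrose_inverse_exists_symm: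
  assumes sA: "symm A"
  shows "\<exists>X. penrose_inverse A X"
proof -
  define W where "W = range ((*v) A)"
  have W: "subspace W"
    unfolding W_def by (intro linear_subspace_image matrix_vector_mul_linear subspace_UNIV)
  obtain p where p: "linear p" "\<And>y. p y \<in> W" "\<And>w. w \<in> W \<Longrightarrow> p w = w"
    "\<And>x. A *v p x = A *v x" "\<And>x y. p x \<bullet> y = x \<bullet> p y"
    using symm_range_projection[OF sA] unfolding W_def by blast
  have "inj_on ((*v) A) W"
  proof (subst linear_inj_on_iff_eq_0[OF matrix_vector_mul_linear W], intro ballI impI)
    fix w assume "w \<in> W" "A *v w = 0"
    then obtain z where "w = A *v z" by (auto simp: W_def)
    then have "w \<bullet> w = z \<bullet> (A *v w)" using symm_inner_commute[OF sA] by simp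
    then show "w = 0" using \<open>A *v w = 0\<close> by simp
  qed
  then obtain g where g: "linear g" "\<And>y. g y \<in> W" "\<And>w. w \<in> W \<Longrightarrow> g (A *v w) = w"
    using linear_exists_left_inverse_on[OF matrix_vector_mul_linear W] by blast
  define X where "X = matrix (g \<circ> p)"
  have X: "X *v y = g (p y)" for y
    unfolding X_def using g(1) p(1) by (simp add: linear_compose)
  have AX: "A *v (X *v y) = p y" for y
  proof -
    obtain z where "p y = A *v z" using p(2) by (auto simp: W_def)
    then show ?thesis using g(3)[OF p(2)] p(4) by (metis X)
  qed
  have XA: "X *v (A *v y) = p y" for y
    using g(3)[OF p(2)] p(3,4) by (simp add: X W_def)
  have "A ** X ** A = A"
    by (simp add: matrix_eq matrix_vector_mul_assoc[symmetric] XA p(4))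
  moreover have "X ** A ** X = X"
    by (simp add: matrix_eq matrix_vector_mul_assoc[symmetric] XA) (simp add: X g(2) p(3))
  moreover have "symm (A ** X)" "symm (X ** A)"
    by (simp_all add: symmI_inner matrix_vector_mul_assoc[symmetric] AX XA p(5))
  ultimately show ?thesis unfolding penrose_inverse_def symm_def by blast
qed

lemma pinv_symm:
  assumes "symm A"
  shows "penrose_inverse A (pinv A)" and "symm (pinv A)"
proof -
  obtain X where X: "penrose_inverse A X" using penrose_inverse_exists_symm[OF assms] by blast
  have "pinv A = X"
    unfolding pinv_def using X penrose_inverse_unique
    by (intro the_equality) (auto simp: penrose_inverse_def)
  then show "penrose_inverse A (pinv A)" using X by simp
  then show "symm (pinv A)"
    using penrose_inverse_unique[OF penrose_inverse_transpose] assms unfolding symm_def by metis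
qed

section \<open>The S-lemma\<close>

lemma quadratic_roots_opposite_signs:
  fixes a b c :: real
  assumes "a < 0" "0 < c"
  obtains t1 t2 where "t1 < 0" "0 < t2" "a + t1 * b + t1\<^sup>2 * c = 0" "a + t2 * b + t2\<^sup>2 * c = 0"
proof -
  define r where "r = sqrt (b\<^sup>2 - 4 * a * c)"
  have D: "b\<^sup>2 < b\<^sup>2 - 4 * a * c" using assms by (simp add: mult_neg_pos)
  have "0 \<le> b\<^sup>2 - 4 * a * c" using D zero_le_power2[of b] by linarith
  then have r2: "r\<^sup>2 = b\<^sup>2 - 4 * a * c" unfolding r_def by simp
  have rb: "\<bar>b\<bar> < r" unfolding r_def by (rule real_less_rsqrt) (use D in simp)
  have root: "a + t * b + t\<^sup>2 * c = 0" if "t = (s - b) / (2 * c)" "s\<^sup>2 = r\<^sup>2" for t s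
  proof -
    have "2 * c * t = s - b" using that(1) assms by (simp add: field_simps)
    then have "(2 * c * t + b)\<^sup>2 = b\<^sup>2 - 4 * a * c" using that(2) r2 by simp
    then have "4 * c * (a + t * b + t\<^sup>2 * c) = 0" by (simp add: algebra_simps power2_eq_square)
    then show ?thesis using assms by simp
  qed
  show ?thesis
  proof (rule that)
    show "(- r - b) / (2 * c) < 0"
      using assms rb abs_ge_minus_self[of b] by (intro divide_neg_pos) linarith+
    show "0 < (r - b) / (2 * c)"
      using assms rb abs_ge_self[of b] by (intro divide_pos_pos) linarith+
    show "a + ((- r - b) / (2 * c)) * b + ((- r - b) / (2 * c))\<^sup>2 * c = 0"
      by (rule root[of _ "- r"]) simp_all
    show "a + ((r - b) / (2 * c)) * b + ((r - b) / (2 * c))\<^sup>2 * c = 0"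
      by (rule root[of _ r]) simp_all
  qed
qed

text \<open>On the line \<open>u + t v\<close> the form \<open>quad B\<close> vanishes at some \<open>t\<^sub>1 < 0 < t\<^sub>2\<close>, where
  \<open>quad A\<close> is therefore nonnegative; the combination \<open>quad B v \<cdot> quad A - quad A v \<cdot> quad B\<close>
  is affine in \<open>t\<close>, so it is nonnegative at \<open>t = 0\<close> as well.\<close>

lemma S_lemma_cross_inequality:
  assumes hyp: "\<And>w. 0 \<le> quad B w \<Longrightarrow> 0 \<le> quad A w"
    and u: "quad B u < 0" and v: "0 < quad B v"
  shows "quad A v * quad B u \<le> quad A u * quad B v"
proof -
  define a b where "a = u \<bullet> (A *v v) + v \<bullet> (A *v u)" and "b = u \<bullet> (B *v v) + v \<bullet> (B *v u)"
  define c0 c1 where "c0 = quad B v * quad A u - quad A v * quad B u"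
    and "c1 = quad B v * a - quad A v * b"
  have line: "quad B v * quad A (u + t *\<^sub>R v) - quad A v * quad B (u + t *\<^sub>R v) = c0 + t * c1" for t
    unfolding quad_add_scaleR a_def b_def c0_def c1_def by (simp add: algebra_simps power2_eq_square)
  have at_root: "0 \<le> c0 + t * c1" if "quad B u + t * b + t\<^sup>2 * quad B v = 0" for t
  proof -
    have "quad B (u + t *\<^sub>R v) = 0" using that unfolding quad_add_scaleR b_def .
    moreover from this have "0 \<le> quad B v * quad A (u + t *\<^sub>R v)"
      using hyp[of "u + t *\<^sub>R v"] v by simp
    ultimately show ?thesis using line[of t] by simp
  qed
  obtain t1 t2 where t: "t1 < 0" "0 < t2" "quad B u + t1 * b + t1\<^sup>2 * quad B v = 0"
    "quad B u + t2 * b + t2\<^sup>2 * quad B v = 0"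
    using quadratic_roots_opposite_signs[OF u v] by blast
  have "0 \<le> t2 * (c0 + t1 * c1)" "0 \<le> (- t1) * (c0 + t2 * c1)"
    using at_root[OF t(3)] at_root[OF t(4)] t(1,2) by (simp_all add: mult_nonpos_nonneg)
  then have "0 \<le> (t2 - t1) * c0" by (simp add: algebra_simps)
  then show ?thesis using t(1,2) by (simp add: c0_def c1_def zero_le_mult_iff mult.commute)
qed

theorem S_lemma:
  assumes "\<exists>v. 0 < quad B v" and hyp: "\<And>w. 0 \<le> quad B w \<Longrightarrow> 0 \<le> quad A w"
  shows "\<exists>\<alpha>\<ge>0. \<forall>w. 0 \<le> quad (A - \<alpha> *\<^sub>R B) w"
proof -
  define S where "S = {quad A v / quad B v | v. 0 < quad B v}"
  have "S \<noteq> {}" using assms(1) by (auto simp: S_def)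
  have S_nonneg: "0 \<le> s" if "s \<in> S" for s
    using that hyp by (auto simp: S_def)
  define \<alpha> where "\<alpha> = Inf S"
  have "0 \<le> \<alpha>" unfolding \<alpha>_def using \<open>S \<noteq> {}\<close> S_nonneg by (intro cInf_greatest)
  moreover have "0 \<le> quad A w - \<alpha> * quad B w" for w
  proof (cases "quad B w" "0::real" rule: linorder_cases)
    case greater
    have "\<alpha> \<le> quad A w / quad B w"
      unfolding \<alpha>_def using greater S_nonneg by (intro cInf_lower bdd_belowI) (auto simp: S_def)
    then show ?thesis using greater by (simp add: field_simps)
  next
    case less
    have "quad A w / quad B w \<le> \<alpha>"
      unfolding \<alpha>_def
    proof (rule cInf_greatest[OF \<open>S \<noteq> {}\<close>])
      fix s assume "s \<in> S"
      then obtain v where v: "s = quad A v / quad B v" "0 < quad B v" by (auto simp: S_def)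
      have "s * quad B w * quad B v \<le> quad A w * quad B v"
        using S_lemma_cross_inequality[OF hyp less v(2)] v by simp
      then have "s * quad B w \<le> quad A w" using v(2) by (rule mult_right_le_imp_le)
      then show "quad A w / quad B w \<le> s" using less by (simp add: field_simps)
    qed
    then show ?thesis using less by (simp add: field_simps)
  qed (simp add: hyp)
  ultimately show ?thesis by (auto simp: quad_diff_matrix quad_scaleR_matrix)
qed

section \<open>Block vectors and the sufficient condition\<close>

definition vjoin :: "real^'q \<Rightarrow> real^'r \<Rightarrow> real^('q::finite + 'r::finite)" where
  "vjoin x y = (\<chi> k. case k of Inl i \<Rightarrow> x $ i | Inr j \<Rightarrow> y $ j)"

definition vhead :: "real^('q::finite + 'r::finite) \<Rightarrow> real^'q" where
  "vhead w = (\<chi> i. w $ Inl i)"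

definition vtail :: "real^('q::finite + 'r::finite) \<Rightarrow> real^'r" where
  "vtail w = (\<chi> j. w $ Inr j)"

lemma vec_sum_eqI:
  fixes a b :: "'a^('q::finite + 'r::finite)"
  assumes "\<And>i. a $ Inl i = b $ Inl i" "\<And>j. a $ Inr j = b $ Inr j"
  shows "a = b"
  unfolding vec_eq_iff by (metis assms sum.exhaust)

lemma vjoin_nth [simp]: "vjoin x y $ Inl i = x $ i" "vjoin x y $ Inr j = y $ j"
  by (simp_all add: vjoin_def)

lemma vhead_vjoin [simp]: "vhead (vjoin x y) = x"
  and vtail_vjoin [simp]: "vtail (vjoin x y) = y"
  by (simp_all add: vhead_def vtail_def vec_eq_iff)

lemma vjoin_vhead_vtail [simp]: "vjoin (vhead w) (vtail w) = w"
  by (rule vec_sum_eqI) (simp_all add: vhead_def vtail_def)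

lemma vjoin_zero [simp]: "vjoin 0 0 = 0"
  and vjoin_add [simp]: "vjoin x y + vjoin x' y' = vjoin (x + x') (y + y')"
  and vjoin_scaleR [simp]: "c *\<^sub>R vjoin x y = vjoin (c *\<^sub>R x) (c *\<^sub>R y)"
  by (rule vec_sum_eqI; simp)+

lemma vhead_scaleR [simp]: "vhead (c *\<^sub>R w) = c *\<^sub>R vhead w"
  by (simp add: vhead_def vec_eq_iff)

lemma sum_UNIV_sum: "(\<Sum>k\<in>(UNIV::('a::finite + 'b::finite) set). f k) = (\<Sum>i\<in>UNIV. f (Inl i)) + (\<Sum>j\<in>UNIV. f (Inr j))"
  using sum.Plus[of "UNIV::'a set" "UNIV::'b set" f] by (simp add: comp_def)

lemma inner_vjoin [simp]: "vjoin x y \<bullet> vjoin x' y' = x \<bullet> x' + y \<bullet> y'"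
  by (simp add: inner_vec_def sum_UNIV_sum)

lemma norm_vjoin_le:
  fixes x :: "real^'q::finite" and y :: "real^'r::finite"
  shows "norm (vjoin x y) \<le> norm x + norm y"
proof -
  have "norm (vjoin x y) \<le> norm (vjoin x (0::real^'r)) + norm (vjoin (0::real^'q) y)"
    using norm_triangle_ineq[of "vjoin x (0::real^'r)" "vjoin (0::real^'q) y"] by simp
  then show ?thesis by (simp add: norm_eq_sqrt_inner)
qed

lemma matrix_vector_mult_vjoin:
  "A *v vjoin x y = vjoin (blk11 A *v x + blk12 A *v y) (blk21 A *v x + blk22 A *v y)"
  by (rule vec_sum_eqI) (simp_all add: matrix_vector_mult_def blk11_def blk12_def blk21_def
      blk22_def sum_UNIV_sum)

lemma quad_vjoin:
  "quad A (vjoin x y) = quad (blk11 A) x + x \<bullet> (blk12 A *v y) + y \<bullet> (blk21 A *v x) + quad (blk22 A) y"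
  by (simp add: quad_def matrix_vector_mult_vjoin inner_add_right)

lemma continuous_on_vhead: "continuous_on X vhead"
  and continuous_on_vtail: "continuous_on X vtail"
  unfolding vhead_def vtail_def by (intro continuous_intros continuous_on_component)+

lemma blk21_eq_transpose_blk12: "symm A \<Longrightarrow> blk21 A = transpose (blk12 A)"
  unfolding symm_def
  by (auto simp: blk21_def blk12_def transpose_def vec_eq_iff dest: arg_cong[where f="\<lambda>A. A $ _ $ _"])

lemma symm_blk22: "symm A \<Longrightarrow> symm (blk22 A)"
  unfolding symm_def
  by (auto simp: blk22_def transpose_def vec_eq_iff dest: arg_cong[where f="\<lambda>A. A $ _ $ _"])

lemma quad_vjoin_symm:
  assumes "symm A"
  shows "quad A (vjoin x y) = quad (blk11 A) x + 2 * (x \<bullet> (blk12 A *v y)) + quad (blk22 A) y"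
  using inner_transpose_matrix[of "blk12 A" x y]
  by (simp add: quad_vjoin blk21_eq_transpose_blk12[OF assms] inner_commute)

lemma stackIZ_mult: "stackIZ Z *v x = vjoin x (Z *v x)"
  by (rule vec_sum_eqI) (simp_all add: matrix_vector_mult_def stackIZ_def if_distrib[of "\<lambda>a. a * _"] cong: if_cong)

lemma quad_betaI0: "quad (betaI0 \<beta>) w = \<beta> * (vhead w \<bullet> vhead w)"
proof -
  have "betaI0 \<beta> *v w = vjoin (\<beta> *\<^sub>R vhead w) 0"
    by (rule vec_sum_eqI) (simp_all add: matrix_vector_mult_def betaI0_def vhead_def sum_UNIV_sum
        if_distrib[of "\<lambda>a. a * _"] cong: if_cong)
  then show ?thesis
    using inner_vjoin[of "vhead w" "vtail w"] by (simp add: quad_def)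
qed

lemma symm_betaI0: "symm (betaI0 \<beta>)"
  unfolding symm_def by (rule vec_sum_eqI; rule vec_sum_eqI) (simp_all add: betaI0_def transpose_def)

lemma Zset_iff:
  assumes "symm N"
  shows "Z \<in> Zset N \<longleftrightarrow> (\<forall>x. 0 \<le> quad N (vjoin x (Z *v x)))"
  using symm_sandwich[OF assms, of "stackIZ Z"]
  by (simp add: Zset_def psd_iff_quad quad_sandwich stackIZ_mult)

lemma Zset_plus_iff:
  assumes "symm M"
  shows "Z \<in> Zset_plus M \<longleftrightarrow> (\<forall>x. x \<noteq> 0 \<longrightarrow> 0 < quad M (vjoin x (Z *v x)))"
  using symm_sandwich[OF assms, of "stackIZ Z"]
  by (simp add: Zset_plus_def pd_iff_quad quad_sandwich stackIZ_mult)

lemma loewner_le_betaI0_iff: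
  assumes "symm M" "symm N"
  shows "loewner_le (betaI0 \<beta>) (M - \<alpha> *\<^sub>R N) \<longleftrightarrow>
    (\<forall>w. \<alpha> * quad N w + \<beta> * (vhead w \<bullet> vhead w) \<le> quad M w)"
proof -
  have "symm (M - \<alpha> *\<^sub>R N - betaI0 \<beta>)"
    using assms symm_betaI0 by (intro symm_diff symm_scaleR)
  then show ?thesis
    unfolding loewner_le_def psd_iff_quad quad_diff_matrix quad_scaleR_matrix quad_betaI0
    by (simp add: algebra_simps)
qed

theorem Zset_subset_Zset_plus_if_loewner:
  assumes "symm M" "symm N" "0 \<le> \<alpha>" "0 < \<beta>" "loewner_le (betaI0 \<beta>) (M - \<alpha> *\<^sub>R N)"
  shows "Zset N \<subseteq> Zset_plus M"
proof
  fix Z assume "Z \<in> Zset N"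
  have "0 < quad M (vjoin x (Z *v x))" if "x \<noteq> 0" for x
  proof -
    have "0 \<le> \<alpha> * quad N (vjoin x (Z *v x))"
      using \<open>Z \<in> Zset N\<close> assms(2,3) by (simp add: Zset_iff)
    moreover have "0 < \<beta> * (x \<bullet> x)" using assms(4) that by simp
    ultimately show ?thesis
      using assms(5) loewner_le_betaI0_iff[OF assms(1,2)] by (smt (verit) vhead_vjoin)
  qed
  then show "Z \<in> Zset_plus M" using assms(1) by (simp add: Zset_plus_iff)
qed

section \<open>Necessity of the condition\<close>

definition outer_prod :: "real^'m \<Rightarrow> real^'n \<Rightarrow> real^'n^'m" where
  "outer_prod a b = (\<chi> i j. a $ i * b $ j)"

lemma outer_prod_mult: "outer_prod a b *v u = (b \<bullet> u) *\<^sub>R a"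
  by (simp add: vec_eq_iff outer_prod_def matrix_vector_mult_def inner_vec_def
      sum_distrib_left algebra_simps)

locale Pi_matrix =
  fixes N :: "real^('q::finite + 'r::finite)^('q + 'r)"
  assumes N_in_PiSet: "N \<in> PiSet"
begin

lemma symm_N: "symm N"
  and psd_neg_blk22: "psd (- blk22 N)"
  and psd_schur: "psd (schur N)"
  and blk12_kernel: "blk22 N *v y = 0 \<Longrightarrow> blk12 N *v y = 0"
  using N_in_PiSet by (auto simp: PiSet_def loewner_le_def)

lemma quad_blk22_nonpos: "quad (blk22 N) y \<le> 0"
  using psd_neg_blk22 by (simp add: psd_iff_quad quad_uminus_matrix)

lemma N_mult_kernel: "blk22 N *v y = 0 \<Longrightarrow> N *v vjoin 0 y = 0"
  using blk12_kernel by (simp add: matrix_vector_mult_vjoin)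

definition Z_center :: "real^'q^'r" where
  "Z_center = - (pinv (blk22 N) ** blk21 N)"

lemma blk22_Z_center: "blk22 N ** Z_center = - blk21 N"
proof -
  define X where "X = pinv (blk22 N)"
  have sN22: "symm (blk22 N)" by (rule symm_blk22[OF symm_N])
  have NXN: "blk22 N ** X ** blk22 N = blk22 N"
    using pinv_symm(1)[OF sN22] by (simp add: X_def penrose_inverse_def)
  \<comment> \<open>the kernel condition of \<open>PiSet\<close> turns \<open>N\<^sub>2\<^sub>2 X N\<^sub>2\<^sub>2 = N\<^sub>2\<^sub>2\<close> into \<open>N\<^sub>1\<^sub>2 X N\<^sub>2\<^sub>2 = N\<^sub>1\<^sub>2\<close>\<close>
  have "blk12 N *v (v - (X ** blk22 N) *v v) = 0" for v
  proof (rule blk12_kernel)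
    show "blk22 N *v (v - (X ** blk22 N) *v v) = 0"
      using NXN by (simp add: matrix_vector_mult_diff_distrib matrix_vector_mul_assoc matrix_mul_assoc)
  qed
  then have "blk12 N ** X ** blk22 N = blk12 N"
    by (simp add: matrix_eq matrix_vector_mult_diff_distrib matrix_vector_mul_assoc[symmetric]
        matrix_mul_assoc)
  then have "transpose (blk12 N ** X ** blk22 N) = blk21 N"
    by (simp add: blk21_eq_transpose_blk12[OF symm_N])
  then have "blk22 N ** X ** blk21 N = blk21 N"
    using pinv_symm(2)[OF sN22] sN22
    by (simp add: symm_def X_def matrix_transpose_mul matrix_mul_assoc blk21_eq_transpose_blk12[OF symm_N])
  then show ?thesis
    by (simp add: Z_center_def X_def matrix_mul_assoc[symmetric] matrix_eq
        matrix_vector_mul_assoc[symmetric] matrix_vector_mult_uminus_left vec.neg)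
qed

lemma N_mult_center: "N *v vjoin x (Z_center *v x) = vjoin (schur N *v x) 0"
proof -
  have "blk22 N *v (Z_center *v x) = - (blk21 N *v x)"
    by (metis blk22_Z_center matrix_vector_mul_assoc matrix_vector_mult_uminus_left)
  moreover have "blk11 N *v x + blk12 N *v (Z_center *v x) = schur N *v x"
    by (simp add: schur_def Z_center_def matrix_vector_mult_diff_rdistrib vec.neg
        matrix_vector_mult_uminus_left matrix_vector_mul_assoc[symmetric])
  ultimately show ?thesis by (simp add: matrix_vector_mult_vjoin)
qed

lemma quad_N_center_shift:
  "quad N (vjoin x (Z_center *v x + e)) = quad (schur N) x + quad (blk22 N) e"
proof -
  define w0 where "w0 = vjoin x (Z_center *v x)"
  have "vjoin x (Z_center *v x + e) = w0 + vjoin 0 e" by (simp add: w0_def)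
  moreover have "w0 \<bullet> (N *v vjoin 0 e) = 0"
    using symm_inner_commute[OF symm_N, of w0 "vjoin 0 e"] by (simp add: w0_def N_mult_center)
  moreover have "quad N w0 = quad (schur N) x" by (simp add: quad_def w0_def N_mult_center)
  moreover have "quad N (vjoin 0 e) = quad (blk22 N) e"
    using quad_vjoin[of N 0 e] by (simp add: quad_def)
  ultimately show ?thesis by (simp add: quad_add_symm[OF symm_N])
qed

lemma exists_Zset_through:
  assumes x: "vhead w \<noteq> 0" and w: "0 \<le> quad N w"
  obtains Z where "Z \<in> Zset N" "Z *v vhead w = vtail w"
proof -
  define e where "e = vtail w - Z_center *v vhead w"
  have "w = vjoin (vhead w) (Z_center *v vhead w + e)" by (simp add: e_def)
  then have "0 \<le> quad (schur N) (vhead w) + quad (blk22 N) e"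
    using w quad_N_center_shift by metis
  then obtain v where v: "v \<bullet> vhead w = 1"
    "\<And>u. 0 \<le> quad (schur N) u + (v \<bullet> u)\<^sup>2 * quad (blk22 N) e"
    using psd_rank_one_completion[OF psd_schur x quad_blk22_nonpos] by blast
  define Z where "Z = Z_center + outer_prod e v"
  have Z: "Z *v u = Z_center *v u + (v \<bullet> u) *\<^sub>R e" for u
    by (simp add: Z_def matrix_vector_mult_add_rdistrib outer_prod_mult)
  have "Z \<in> Zset N"
    using v(2) by (simp add: Zset_iff[OF symm_N] Z quad_N_center_shift quad_scaleR)
  moreover have "Z *v vhead w = vtail w" by (simp add: Z v(1) e_def)
  ultimately show ?thesis by (rule that)
qed

lemma subspace_kernel_blk22: "subspace {k. blk22 N *v k = 0}"
  by (simp add: subspace_def matrix_vector_right_distrib matrix_vector_mult_scaleR)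

definition cone_slice :: "(real^('q + 'r)) set" where
  "cone_slice = {w. norm (vhead w) = 1 \<and> (\<forall>k. blk22 N *v k = 0 \<longrightarrow> vtail w \<bullet> k = 0) \<and>
     0 \<le> quad N w}"

lemma quad_N_upper_bound:
  obtains B \<mu> where "0 < B" "0 < \<mu>" "\<And>w. norm (vhead w) = 1 \<Longrightarrow>
    (\<forall>k. blk22 N *v k = 0 \<longrightarrow> vtail w \<bullet> k = 0) \<Longrightarrow>
    quad N w \<le> B + 2 * (B * norm (vtail w)) - \<mu> * (norm (vtail w))\<^sup>2"
proof -
  obtain \<mu> where \<mu>: "0 < \<mu>"
    "\<And>y. (\<And>k. blk22 N *v k = 0 \<Longrightarrow> y \<bullet> k = 0) \<Longrightarrow> \<mu> * (y \<bullet> y) \<le> - quad (blk22 N) y"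
    using psd_coercive_on_kernel_complement[OF psd_neg_blk22]
    by (metis matrix_vector_mult_uminus_left neg_equal_0_iff_equal quad_uminus_matrix)
  obtain B1 where B1: "\<And>x. norm (blk11 N *v x) \<le> norm x * B1"
    using bounded_linear.bounded[OF matrix_vector_mul_bounded_linear] by blast
  obtain B2 where B2: "0 < B2" "\<And>y. norm (blk12 N *v y) \<le> norm y * B2"
    using bounded_linear.pos_bounded[OF matrix_vector_mul_bounded_linear] by blast
  define B where "B = max B1 B2"
  have "quad N w \<le> B + 2 * (B * norm (vtail w)) - \<mu> * (norm (vtail w))\<^sup>2"
    if x: "norm (vhead w) = 1" and y: "\<forall>k. blk22 N *v k = 0 \<longrightarrow> vtail w \<bullet> k = 0" for w
  proof -
    define x y where "x = vhead w" and "y = vtail w"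
    have "quad (blk11 N) x \<le> B"
      using norm_cauchy_schwarz[of x "blk11 N *v x"] B1[of x] x
      by (simp add: quad_def x_def B_def)
    moreover have "x \<bullet> (blk12 N *v y) \<le> B * norm y"
    proof -
      have "norm y * B2 \<le> B * norm y"
        unfolding B_def by (metis max.cobounded2 mult.commute mult_right_mono norm_ge_zero)
      then show ?thesis
        using norm_cauchy_schwarz[of x "blk12 N *v y"] B2(2)[of y] x by (simp add: x_def)
    qed
    moreover have "quad (blk22 N) y \<le> - (\<mu> * (norm y)\<^sup>2)"
      using \<mu>(2)[of y] y by (simp add: y_def power2_norm_eq_inner)
    ultimately show ?thesis
      using quad_vjoin_symm[OF symm_N, of x y] unfolding x_def y_def by simp
  qed
  moreover have "0 < B" using B2(1) by (simp add: B_def)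
  ultimately show ?thesis using \<mu>(1) that by blast
qed

lemma compact_cone_slice: "compact cone_slice"
proof -
  obtain B \<mu> where B: "0 < B" "0 < \<mu>" "\<And>w. norm (vhead w) = 1 \<Longrightarrow>
      (\<forall>k. blk22 N *v k = 0 \<longrightarrow> vtail w \<bullet> k = 0) \<Longrightarrow>
      quad N w \<le> B + 2 * (B * norm (vtail w)) - \<mu> * (norm (vtail w))\<^sup>2"
    using quad_N_upper_bound by blast
  define R where "R = max 1 (3 * B / \<mu>)"
  have R: "norm (vtail w) \<le> R" if "w \<in> cone_slice" for w
  proof (rule ccontr)
    define r where "r = norm (vtail w)"
    assume "\<not> norm (vtail w) \<le> R"
    then have big: "1 < r" "3 * B / \<mu> < r" by (auto simp: r_def R_def)
    have "3 * B < \<mu> * r" using big(2) B(2) by (simp add: field_simps)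
    then have "3 * B * r < \<mu> * r * r"
      by (rule mult_strict_right_mono) (use big in linarith)
    moreover have "B \<le> B * r" using big(1) B(1) by (simp add: mult_le_cancel_left1)
    ultimately have "B + 2 * (B * r) - \<mu> * r\<^sup>2 < 0" by (simp add: power2_eq_square algebra_simps)
    then show False using that B(3)[of w] by (simp add: cone_slice_def r_def)
  qed
  have "bounded cone_slice"
    unfolding bounded_iff
  proof (intro exI ballI)
    fix w assume "w \<in> cone_slice"
    then have "norm (vhead w) + norm (vtail w) \<le> 1 + R" using R by (simp add: cone_slice_def)
    then show "norm w \<le> 1 + R" using norm_vjoin_le[of "vhead w" "vtail w"] by simp
  qed
  moreover have "closed cone_slice" unfolding cone_slice_def
    by (intro closed_Collect_conj closed_Collect_all closed_Collect_imp open_Collect_const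
        closed_Collect_eq closed_Collect_le continuous_intros continuous_on_vhead continuous_on_vtail
        continuous_on_quad)
  ultimately show ?thesis by (simp add: compact_eq_bounded_closed)
qed

end

locale Pi_inclusion = Pi_matrix N for N :: "real^('q::finite + 'r::finite)^('q + 'r)" +
  fixes M :: "real^('q + 'r)^('q + 'r)"
  assumes symm_M: "symm M"
    and blk22_M_nonpos: "loewner_le (blk22 M) 0"
    and Zset_incl: "Zset N \<subseteq> Zset_plus M"
begin

lemma quad_M_pos_on_cone:
  assumes "vhead w \<noteq> 0" "0 \<le> quad N w"
  shows "0 < quad M w"
proof -
  obtain Z where "Z \<in> Zset N" "Z *v vhead w = vtail w"
    using exists_Zset_through[OF assms] .
  then show ?thesis
    using Zset_incl assms(1) Zset_plus_iff[OF symm_M] by (metis subsetD vjoin_vhead_vtail)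
qed

text \<open>Moving along a kernel direction of \<open>N\<^sub>2\<^sub>2\<close> does not change \<open>quad N\<close>, so \<open>quad M\<close>
  stays positive along the whole line; a nonpositive leading coefficient then forces the
  line to be flat.\<close>

lemma M_blocks_vanish_on_kernel_blk22:
  assumes y: "blk22 N *v y = 0" and x: "x \<noteq> 0"
  shows "blk22 M *v y = 0" and "x \<bullet> (blk12 M *v y) = 0"
proof -
  define w0 z where "w0 = vjoin x (Z_center *v x)" and "z = vjoin (0::real^'q) y"
  define c d where "c = w0 \<bullet> (M *v z) + z \<bullet> (M *v w0)" and "d = quad M z"
  have "0 \<le> quad N w0"
    using quad_N_center_shift[of x 0] psd_schur by (simp add: w0_def psd_iff_quad quad_def)
  moreover have "quad N (w0 + s *\<^sub>R z) = quad N w0" for s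
    using N_mult_kernel[OF y]
    by (intro quad_add_kernel[OF symm_N]) (simp only: z_def matrix_vector_mult_scaleR scaleR_zero_right)
  moreover have "vhead (w0 + s *\<^sub>R z) = x" for s by (simp add: w0_def z_def)
  ultimately have "0 < quad M (w0 + s *\<^sub>R z)" for s
    using quad_M_pos_on_cone[of "w0 + s *\<^sub>R z"] x by simp
  then have disc: "c\<^sup>2 \<le> 4 * d * quad M w0"
    by (intro nonneg_quadratic_discriminant less_imp_le) (simp add: quad_add_scaleR c_def d_def)
  have d_eq: "d = quad (blk22 M) y"
    using quad_vjoin[of M 0 y] by (simp add: d_def z_def quad_def)
  have psd_M22: "psd (- blk22 M)" using blk22_M_nonpos by (simp add: loewner_le_def)
  have "d \<le> 0" using psd_M22 by (simp add: d_eq psd_iff_quad quad_uminus_matrix)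
  moreover have "0 < quad M w0"
    using quad_M_pos_on_cone \<open>0 \<le> quad N w0\<close> x by (simp add: w0_def)
  ultimately have "4 * d * quad M w0 \<le> 0" by (simp add: mult_nonpos_nonneg)
  then have "c\<^sup>2 \<le> 0" using disc by linarith
  then have "c = 0" by simp
  have "0 \<le> 4 * d * quad M w0" using disc zero_le_power2[of c] by linarith
  then have "d = 0" using \<open>0 < quad M w0\<close> \<open>d \<le> 0\<close> by (simp add: zero_le_mult_iff)
  then have "quad (- blk22 M) y = 0" by (simp add: d_eq quad_uminus_matrix)
  then show M22: "blk22 M *v y = 0"
    using psd_quad_eq_0_imp_kernel[OF psd_M22] by (simp add: matrix_vector_mult_uminus_left)
  have "c = 2 * ((M *v z) \<bullet> w0)"
    using symm_inner_commute[OF symm_M, of z w0] by (simp add: c_def inner_commute)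
  then show "x \<bullet> (blk12 M *v y) = 0"
    using \<open>c = 0\<close> M22 by (simp add: z_def w0_def matrix_vector_mult_vjoin inner_commute)
qed

lemma M_mult_kernel:
  assumes "blk22 N *v y = 0"
  shows "M *v vjoin 0 y = 0"
proof -
  have "blk22 M *v y = 0"
    using M_blocks_vanish_on_kernel_blk22(1)[OF assms, of "axis undefined 1"] by simp
  moreover have "blk12 M *v y = 0"
    using M_blocks_vanish_on_kernel_blk22(2)[OF assms, of "blk12 M *v y"] by auto
  ultimately show ?thesis by (simp add: matrix_vector_mult_vjoin)
qed

lemma reduce_mod_kernel:
  obtains w' where "vhead w' = vhead w" "\<forall>k. blk22 N *v k = 0 \<longrightarrow> vtail w' \<bullet> k = 0"
    "quad N w' = quad N w" "quad M w' = quad M w"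
proof -
  define K where "K = {k. blk22 N *v k = 0}"
  obtain y0 z where yz: "y0 \<in> span K" "\<And>k. k \<in> span K \<Longrightarrow> orthogonal z k" "vtail w = y0 + z"
    by (rule orthogonal_subspace_decomp_exists[of K "vtail w"]) blast
  have "span K = K" unfolding K_def by (rule span_eq_iff[THEN iffD2, OF subspace_kernel_blk22])
  then have "y0 \<in> K" using yz(1) by (simp only:)
  then have y0: "blk22 N *v (- y0) = 0" by (simp add: K_def vec.neg)
  have w': "w + vjoin 0 (- y0) = vjoin (vhead w) z"
    by (subst (1) vjoin_vhead_vtail[symmetric]) (simp add: yz(3))
  show ?thesis
  proof (rule that[of "w + vjoin 0 (- y0)"])
    show "vhead (w + vjoin 0 (- y0)) = vhead w" by (simp add: w')
    show "\<forall>k. blk22 N *v k = 0 \<longrightarrow> vtail (w + vjoin 0 (- y0)) \<bullet> k = 0"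
      using yz(2)[OF span_base] by (simp add: w' K_def orthogonal_def)
    show "quad N (w + vjoin 0 (- y0)) = quad N w"
      by (rule quad_add_kernel[OF symm_N N_mult_kernel[OF y0]])
    show "quad M (w + vjoin 0 (- y0)) = quad M w"
      by (rule quad_add_kernel[OF symm_M M_mult_kernel[OF y0]])
  qed
qed

lemma cone_slice_min_pos:
  obtains \<beta> where "0 < \<beta>" "\<And>w. w \<in> cone_slice \<Longrightarrow> \<beta> \<le> quad M w"
proof (cases "cone_slice = {}")
  case True
  then show ?thesis using that[of 1] by simp
next
  case False
  obtain w0 where "w0 \<in> cone_slice" "\<And>w. w \<in> cone_slice \<Longrightarrow> quad M w0 \<le> quad M w"
    using continuous_attains_inf[OF compact_cone_slice False continuous_on_quad] by blast
  moreover have "0 < quad M w0"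
    using \<open>w0 \<in> cone_slice\<close> by (intro quad_M_pos_on_cone) (auto simp: cone_slice_def)
  ultimately show ?thesis using that by blast
qed

lemma quad_M_eq_0_if_vhead_eq_0:
  assumes "vhead w = 0" "0 \<le> quad N w"
  shows "quad M w = 0"
proof -
  have w: "w = vjoin 0 (vtail w)" using assms(1) by (metis vjoin_vhead_vtail)
  then have "0 \<le> quad (blk22 N) (vtail w)"
    using assms(2) quad_vjoin[of N 0 "vtail w"] by (simp add: quad_def)
  then have "quad (- blk22 N) (vtail w) = 0"
    using quad_blk22_nonpos[of "vtail w"] by (simp add: quad_uminus_matrix)
  then have "blk22 N *v vtail w = 0"
    using psd_quad_eq_0_imp_kernel[OF psd_neg_blk22] by (simp add: matrix_vector_mult_uminus_left)
  then show ?thesis using M_mult_kernel w by (metis quad_def inner_zero_right)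
qed

lemma uniform_positivity:
  obtains \<beta> where "0 < \<beta>" "\<And>w. 0 \<le> quad N w \<Longrightarrow> \<beta> * (vhead w \<bullet> vhead w) \<le> quad M w"
proof -
  obtain \<beta> where \<beta>: "0 < \<beta>" "\<And>w. w \<in> cone_slice \<Longrightarrow> \<beta> \<le> quad M w"
    using cone_slice_min_pos by blast
  have "\<beta> * (vhead w \<bullet> vhead w) \<le> quad M w" if w: "0 \<le> quad N w" for w
  proof (cases "vhead w = 0")
    case True
    then show ?thesis using quad_M_eq_0_if_vhead_eq_0[OF True w] by simp
  next
    case False
    define t where "t = norm (vhead w)"
    have "0 < t" using False by (simp add: t_def)
    obtain w' where w': "vhead w' = vhead ((1 / t) *\<^sub>R w)"
      "\<forall>k. blk22 N *v k = 0 \<longrightarrow> vtail w' \<bullet> k = 0"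
      "quad N w' = quad N ((1 / t) *\<^sub>R w)" "quad M w' = quad M ((1 / t) *\<^sub>R w)"
      by (rule reduce_mod_kernel)
    have "w' \<in> cone_slice"
      using w' w \<open>0 < t\<close> by (simp add: cone_slice_def quad_scaleR t_def)
    then have "\<beta> \<le> quad M w / t\<^sup>2"
      using \<beta>(2)[of w'] w'(4) by (simp add: quad_scaleR power_divide)
    moreover have "vhead w \<bullet> vhead w = t\<^sup>2" by (simp add: t_def power2_norm_eq_inner)
    ultimately show ?thesis using \<open>0 < t\<close> by (simp add: field_simps)
  qed
  then show ?thesis using \<beta>(1) that by blast
qed

theorem exists_loewner_certificate:
  assumes "has_pos_eigenvalue N"
  shows "\<exists>\<alpha> \<beta>. 0 \<le> \<alpha> \<and> 0 < \<beta> \<and> loewner_le (betaI0 \<beta>) (M - \<alpha> *\<^sub>R N)"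
proof -
  obtain \<beta> where \<beta>: "0 < \<beta>" "\<And>w. 0 \<le> quad N w \<Longrightarrow> \<beta> * (vhead w \<bullet> vhead w) \<le> quad M w"
    using uniform_positivity by blast
  obtain c v where "0 < c" "v \<noteq> 0" "N *v v = c *\<^sub>R v"
    using assms by (auto simp: has_pos_eigenvalue_def)
  then have "0 < quad N v" by (simp add: quad_def)
  moreover have "0 \<le> quad (M - betaI0 \<beta>) w" if "0 \<le> quad N w" for w
    using \<beta>(2)[OF that] by (simp add: quad_diff_matrix quad_betaI0)
  ultimately obtain \<alpha> where \<alpha>: "0 \<le> \<alpha>" "\<forall>w. 0 \<le> quad (M - betaI0 \<beta> - \<alpha> *\<^sub>R N) w"
    using S_lemma by blast
  then have "\<forall>w. \<alpha> * quad N w + \<beta> * (vhead w \<bullet> vhead w) \<le> quad M w"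
    unfolding quad_diff_matrix quad_betaI0 quad_scaleR_matrix by (simp add: algebra_simps)
  then show ?thesis
    using \<alpha>(1) \<beta>(1) loewner_le_betaI0_iff[OF symm_M symm_N] by blast
qed

end

theorem mainTheorem11:
  fixes M N :: "real^('q::finite + 'r::finite)^('q + 'r)"
  assumes "symm M" and "symm N"
  shows "((\<exists>\<alpha> \<beta>. \<alpha> \<ge> 0 \<and> \<beta> > 0 \<and> loewner_le (betaI0 \<beta>) (M - \<alpha> *\<^sub>R N))
            \<longrightarrow> Zset N \<subseteq> Zset_plus M)
       \<and> ((N \<in> PiSet \<and> loewner_le (blk22 M) 0 \<and> has_pos_eigenvalue N)
            \<longrightarrow> (Zset N \<subseteq> Zset_plus M \<longleftrightarrow>
                 (\<exists>\<alpha> \<beta>. \<alpha> \<ge> 0 \<and> \<beta> > 0 \<and> loewner_le (betaI0 \<beta>) (M - \<alpha> *\<^sub>R N))))"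
proof -
  have sufficient: "(\<exists>\<alpha> \<beta>. \<alpha> \<ge> 0 \<and> \<beta> > 0 \<and> loewner_le (betaI0 \<beta>) (M - \<alpha> *\<^sub>R N))
      \<longrightarrow> Zset N \<subseteq> Zset_plus M"
    using Zset_subset_Zset_plus_if_loewner[OF assms] by blast
  moreover have "Zset N \<subseteq> Zset_plus M \<longrightarrow>
      (\<exists>\<alpha> \<beta>. \<alpha> \<ge> 0 \<and> \<beta> > 0 \<and> loewner_le (betaI0 \<beta>) (M - \<alpha> *\<^sub>R N))"
    if "N \<in> PiSet" "loewner_le (blk22 M) 0" "has_pos_eigenvalue N"
  proof
    assume "Zset N \<subseteq> Zset_plus M"
    then interpret Pi_inclusion N M
      using that assms by unfold_locales
    show "\<exists>\<alpha> \<beta>. \<alpha> \<ge> 0 \<and> \<beta> > 0 \<and> loewner_le (betaI0 \<beta>) (M - \<alpha> *\<^sub>R N)"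
      using exists_loewner_certificate[OF that(3)] by blast
  qed
  ultimately show ?thesis by blast
qed

end
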